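(* Let $p\geq2$ be an integer and consider, on the domain $\{(\theta_1,\theta_p,I_1,I_p)\in\mathbb{T}^2\times(0,\infty)^2\}$, the Hamiltonian \[ \mathcal{G}^+(\theta_1,\theta_p,I_1,I_p):=\sqrt2^{\,1-p}\,I_1^{p/2}\sqrt{I_p}\,\cos(p\,\theta_1-\theta_p), \] with $(\theta_1,I_1)$ and $(\theta_p,I_p)$ canonically conjugate pairs. Let $\mathtt{c}>0$. Then for every sufficiently small $\varepsilon>0$ with $\mathtt{c}>p\varepsilon$ there exists an orbit $g^+_{\varepsilon,\mathtt{c}}(t)=(\theta_1(t),\theta_p(t),I_1(t),I_p(t))$ of $\mathcal{G}^+$ and a time $T_0>0$ such that \[ I_1(0)=\mathtt{c}-p\varepsilon,\quad I_p(0)=\varepsilon,\qquad I_1(T_0)=\mathtt{c}(1-p^{-1}),\quad I_p(T_0)=\frac{\mathtt{c}}{p^2}, \] and \[ \frac{\sqrt2^{\,p+1}}{\mathtt{c}^{\frac{p-1}{2}}}\,p^{-1}\le T_0\le\frac{\sqrt2^{\,p+1}}{\mathtt{c}^{\frac{p-1}{2}}\,(1-p^{-1})^{p/2}}\,p^{-1}. \]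
   Context: The orbit is a solution of Hamilton's equations $\dot\theta_k=\partial_{I_k}\mathcal{G}^+$, $\dot I_k=-\partial_{\theta_k}\mathcal{G}^+$, $k\in\{1,p\}$. "Sufficiently small $\varepsilon$" means $\varepsilon$ below a threshold that may depend on $\mathtt{c}$ and $p$. *)

theory Defs
  imports "HOL-Analysis.Analysis"
begin

text \<open>The Hamiltonian G^+ in the variables (theta_1, theta_p, I_1, I_p); angles are
  represented by real lifts (functions on the torus are 2pi-periodic functions).\<close>
definition Gplus :: "nat \<Rightarrow> real \<Rightarrow> real \<Rightarrow> real \<Rightarrow> real \<Rightarrow> real" where
  "Gplus p th1 thp I1 Ip =
     sqrt 2 powr (1 - real p) * I1 powr (real p / 2) * sqrt Ip * cos (real p * th1 - thp)"

definition hamiltonian_orbit ::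
  "nat \<Rightarrow> real \<Rightarrow> (real \<Rightarrow> real) \<Rightarrow> (real \<Rightarrow> real) \<Rightarrow> (real \<Rightarrow> real) \<Rightarrow> (real \<Rightarrow> real) \<Rightarrow> bool" where
  "hamiltonian_orbit p T th1 thp I1 Ip \<longleftrightarrow>
     (\<forall>t\<in>{0..T}.
        I1 t > 0 \<and> Ip t > 0 \<and>
        (th1 has_real_derivative deriv (\<lambda>x. Gplus p (th1 t) (thp t) x (Ip t)) (I1 t)) (at t within {0..T}) \<and>
        (thp has_real_derivative deriv (\<lambda>x. Gplus p (th1 t) (thp t) (I1 t) x) (Ip t)) (at t within {0..T}) \<and>
        (I1 has_real_derivative - deriv (\<lambda>x. Gplus p x (thp t) (I1 t) (Ip t)) (th1 t)) (at t within {0..T}) \<and>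
        (Ip has_real_derivative - deriv (\<lambda>x. Gplus p (th1 t) x (I1 t) (Ip t)) (thp t)) (at t within {0..T}))"

end

theory Submission
  imports Defs
begin

text \<open>On the plane \<open>\<theta>\<^sub>1 = 0\<close>, \<open>\<theta>\<^sub>p = \<pi>/2\<close> the cosine in \<open>G\<^sup>+\<close> vanishes, so the angles stay
  frozen, \<open>I\<^sub>1 + p I\<^sub>p = c\<close> is conserved, and Hamilton's equations reduce to the scalar ODE
  \<open>I\<^sub>p' = \<surd>2\<^sup>1\<^sup>-\<^sup>p (c - p I\<^sub>p)\<^sup>p\<^sup>/\<^sup>2 \<surd>I\<^sub>p\<close>. Separating variables, the transit time from \<open>\<epsilon>\<close> to
  \<open>c/p\<^sup>2\<close> is \<open>T\<^sub>0 = \<integral> ds / speed(s)\<close>. Bounding \<open>(c - p s)\<^sup>-\<^sup>p\<^sup>/\<^sup>2\<close> from above by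
  \<open>(c(1 - 1/p))\<^sup>-\<^sup>p\<^sup>/\<^sup>2\<close> gives the upper bound; bounding it from below by
  \<open>c\<^sup>-\<^sup>p\<^sup>/\<^sup>2 (1 + p s/c)\<close> gives the lower bound, the correction term \<open>p s/c\<close> making up for the
  missing initial piece \<open>2\<surd>\<epsilon>\<close> once \<open>\<epsilon>\<close> is small.\<close>

lemma strict_mono_on_if_DERIV_pos:
  fixes F F' :: "real \<Rightarrow> real"
  assumes "\<And>x. x \<in> {a..b} \<Longrightarrow> DERIV F x :> F' x" and "\<And>x. x \<in> {a..b} \<Longrightarrow> 0 < F' x"
  shows "strict_mono_on {a..b} F"
proof (rule strict_mono_onI)
  fix x y assume xy: "x \<in> {a..b}" "y \<in> {a..b}" "x < y"
  show "F x < F y"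
  proof (rule DERIV_pos_imp_increasing[OF \<open>x < y\<close>])
    fix z assume "x \<le> z" "z \<le> y"
    then have "z \<in> {a..b}"
      using xy by auto
    then show "\<exists>D. DERIV F z :> D \<and> 0 < D"
      using assms by blast
  qed
qed

lemma DERIV_inverse_function_Icc:
  fixes F F' :: "real \<Rightarrow> real"
  assumes "a \<le> b"
    and der: "\<And>x. x \<in> {a..b} \<Longrightarrow> DERIV F x :> F' x" and pos: "\<And>x. x \<in> {a..b} \<Longrightarrow> 0 < F' x"
  obtains g where "\<And>x. x \<in> {a..b} \<Longrightarrow> g (F x) = x"
    and "\<And>t. t \<in> {F a<..<F b} \<Longrightarrow> g t \<in> {a..b} \<and> DERIV g t :> inverse (F' (g t))"
proof -
  have mono: "strict_mono_on {a..b} F"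
    by (rule strict_mono_on_if_DERIV_pos[OF der pos])
  define g where "g = the_inv_into {a..b} F"
  have gF: "g (F x) = x" if "x \<in> {a..b}" for x
    using the_inv_into_f_f[OF strict_mono_on_imp_inj_on[OF mono] that] by (simp add: g_def)
  have contF: "continuous_on {a..b} F"
    by (rule DERIV_atLeastAtMost_imp_continuous_on) (use der in auto)
  have contg: "continuous_on (F ` {a..b}) g"
    by (rule continuous_on_inv[OF contF compact_Icc]) (use gF in auto)
  have img: "{F a<..<F b} \<subseteq> F ` {a..b}"
  proof
    fix t assume "t \<in> {F a<..<F b}"
    then obtain x where "a \<le> x" "x \<le> b" "F x = t"
      using IVT'[of F a t b, OF _ _ \<open>a \<le> b\<close> contF] by auto
    then show "t \<in> F ` {a..b}" by auto
  qed
  show thesis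
  proof (rule that)
    show "g (F x) = x" if "x \<in> {a..b}" for x
      using gF that .
    fix t assume t: "t \<in> {F a<..<F b}"
    then obtain x where x: "x \<in> {a..b}" "F x = t"
      using img by blast
    then have gt: "g t = x"
      using gF by blast
    have "DERIV g t :> inverse (F' (g t))"
    proof (rule DERIV_inverse_function[where a = "F a" and b = "F b"])
      show "DERIV F (g t) :> F' (g t)"
        using der x gt by simp
      show "F' (g t) \<noteq> 0"
        using pos[of x] x gt by simp
      show "F a < t" "t < F b"
        using t by auto
      show "F (g y) = y" if "F a < y" "y < F b" for y
        using img that gF by auto
      show "isCont g t"
        using continuous_on_subset[OF contg img] t by (simp add: continuous_on_eq_continuous_at)
    qed
    then show "g t \<in> {a..b} \<and> DERIV g t :> inverse (F' (g t))"
      using gt x by simp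
  qed
qed

text \<open>Separation of variables: the solution of \<open>y' = f y\<close> is the inverse of the time function
  \<open>x \<mapsto> \<integral> 1/f\<close>.\<close>
lemma separable_ode_solution:
  fixes f :: "real \<Rightarrow> real"
  assumes cont: "continuous_on {a..b} f" and pos: "\<And>x. x \<in> {a..b} \<Longrightarrow> 0 < f x"
    and y\<^sub>0: "a < y\<^sub>0" and y\<^sub>0\<^sub>1: "y\<^sub>0 \<le> y\<^sub>1" and y\<^sub>1: "y\<^sub>1 < b"
  defines "T \<equiv> integral {y\<^sub>0..y\<^sub>1} (\<lambda>x. 1 / f x)"
  obtains y where "y 0 = y\<^sub>0" and "y T = y\<^sub>1"
    and "\<And>t. t \<in> {0..T} \<Longrightarrow> y t \<in> {a..b} \<and> (y has_real_derivative f (y t)) (at t)"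
proof -
  define h where "h x = 1 / f x" for x
  have cont_h: "continuous_on {a..b} h"
    unfolding h_def using pos by (intro continuous_intros cont) force
  define F where "F x = integral {a..x} h" for x
  \<comment> \<open>\<open>F\<close> is differentiable only inside \<open>{a..b}\<close>; the margins keep the inversion there.\<close>
  define a' b' where "a' = (a + y\<^sub>0) / 2" and "b' = (y\<^sub>1 + b) / 2"
  have a'b': "a < a'" "a' < y\<^sub>0" "y\<^sub>1 < b'" "b' < b"
    using y\<^sub>0 y\<^sub>0\<^sub>1 y\<^sub>1 by (auto simp: a'_def b'_def)
  have dF: "DERIV F x :> h x" if "x \<in> {a'..b'}" for x
  proof -
    have "(F has_real_derivative h x) (at x within {a..b})"
      unfolding F_def using that a'b' by (intro integral_has_real_derivative[OF cont_h]) auto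
    moreover have "at x within {a..b} = at x"
      using that a'b' by (intro at_within_interior) auto
    ultimately show ?thesis by simp
  qed
  have hpos: "0 < h x" if "x \<in> {a'..b'}" for x
    using pos that a'b' by (simp add: h_def)
  have mono: "strict_mono_on {a'..b'} F"
    by (rule strict_mono_on_if_DERIV_pos[OF dF hpos])
  have "a' \<le> b'"
    using a'b' y\<^sub>0\<^sub>1 by linarith
  obtain g where gF: "\<And>x. x \<in> {a'..b'} \<Longrightarrow> g (F x) = x"
    and dg: "\<And>t. t \<in> {F a'<..<F b'} \<Longrightarrow> g t \<in> {a'..b'} \<and> DERIV g t :> inverse (h (g t))"
    using DERIV_inverse_function_Icc[OF \<open>a' \<le> b'\<close> dF hpos] by blast
  have T: "T = F y\<^sub>1 - F y\<^sub>0"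
  proof -
    have "h integrable_on {a..y\<^sub>1}"
      using y\<^sub>1 by (intro integrable_continuous_interval continuous_on_subset[OF cont_h]) auto
    then have "integral {a..y\<^sub>0} h + integral {y\<^sub>0..y\<^sub>1} h = integral {a..y\<^sub>1} h"
      by (rule Henstock_Kurzweil_Integration.integral_combine[OF less_imp_le[OF y\<^sub>0] y\<^sub>0\<^sub>1])
    then show ?thesis
      by (simp add: T_def F_def h_def[abs_def])
  qed
  show thesis
  proof (rule that[of "\<lambda>t. g (t + F y\<^sub>0)"])
    have "y\<^sub>0 \<in> {a'..b'}" "y\<^sub>1 \<in> {a'..b'}"
      using a'b' y\<^sub>0\<^sub>1 by auto
    then show "g (0 + F y\<^sub>0) = y\<^sub>0" "g (T + F y\<^sub>0) = y\<^sub>1"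
      using gF by (simp_all add: T)
    fix t assume "t \<in> {0..T}"
    moreover have "F a' < F y\<^sub>0" "F y\<^sub>1 < F b'"
      using strict_mono_onD[OF mono] a'b' y\<^sub>0\<^sub>1 by simp_all
    ultimately have "t + F y\<^sub>0 \<in> {F a'<..<F b'}"
      by (simp add: T)
    from dg[OF this] have "g (t + F y\<^sub>0) \<in> {a..b}"
      and "(g has_real_derivative f (g (t + F y\<^sub>0))) (at (t + F y\<^sub>0))"
      using a'b' by (auto simp: h_def)
    then show "g (t + F y\<^sub>0) \<in> {a..b} \<and> ((\<lambda>t. g (t + F y\<^sub>0)) has_real_derivative f (g (t + F y\<^sub>0))) (at t)"
      by (simp add: DERIV_shift)
  qed
qed

lemma antiderivative_diff_le_integral:
  fixes \<Psi> \<psi> h :: "real \<Rightarrow> real"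
  assumes "a \<le> b" and "\<And>x. x \<in> {a..b} \<Longrightarrow> (\<Psi> has_real_derivative \<psi> x) (at x within {a..b})"
    and "\<And>x. x \<in> {a..b} \<Longrightarrow> \<psi> x \<le> h x" and "h integrable_on {a..b}"
  shows "\<Psi> b - \<Psi> a \<le> integral {a..b} h"
proof -
  have "(\<psi> has_integral \<Psi> b - \<Psi> a) {a..b}"
    using assms by (intro fundamental_theorem_of_calculus) (auto simp: has_real_derivative_iff_has_vector_derivative)
  then show ?thesis
    using assms(3,4) by (intro has_integral_le[OF _ integrable_integral]) auto
qed

lemma integral_le_antiderivative_diff:
  fixes \<Psi> \<psi> h :: "real \<Rightarrow> real"
  assumes "a \<le> b" and "\<And>x. x \<in> {a..b} \<Longrightarrow> (\<Psi> has_real_derivative \<psi> x) (at x within {a..b})"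
    and "\<And>x. x \<in> {a..b} \<Longrightarrow> h x \<le> \<psi> x" and "h integrable_on {a..b}"
  shows "integral {a..b} h \<le> \<Psi> b - \<Psi> a"
proof -
  have "(\<psi> has_integral \<Psi> b - \<Psi> a) {a..b}"
    using assms by (intro fundamental_theorem_of_calculus) (auto simp: has_real_derivative_iff_has_vector_derivative)
  then show ?thesis
    using assms(3,4) by (intro has_integral_le[OF integrable_integral]) auto
qed

text \<open>The speed of \<open>I\<^sub>p\<close> on the invariant plane \<open>\<theta>\<^sub>1 = 0\<close>, \<open>\<theta>\<^sub>p = \<pi>/2\<close>, \<open>I\<^sub>1 + p I\<^sub>p = c\<close>.\<close>
definition resonant_speed :: "nat \<Rightarrow> real \<Rightarrow> real \<Rightarrow> real" where
  "resonant_speed p c s = sqrt 2 powr (1 - real p) * (c - real p * s) powr (real p / 2) * sqrt s"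

lemma resonant_speed_pos: "0 < s \<Longrightarrow> real p * s < c \<Longrightarrow> 0 < resonant_speed p c s"
  by (simp add: resonant_speed_def)

lemma continuous_on_resonant_speed:
  assumes "\<And>s. s \<in> S \<Longrightarrow> real p * s < c"
  shows "continuous_on S (resonant_speed p c)"
  unfolding resonant_speed_def[abs_def] using assms by (intro continuous_intros) force+

lemma inverse_resonant_speed_integrable:
  assumes "0 < a" and "real p * b < c"
  shows "(\<lambda>s. 1 / resonant_speed p c s) integrable_on {a..b}"
proof (intro integrable_continuous_interval continuous_intros)
  have s: "0 < s \<and> real p * s < c" if "s \<in> {a..b}" for s
    using assms that mult_left_mono[of s b "real p"] by auto
  then show "continuous_on {a..b} (resonant_speed p c)"
    by (intro continuous_on_resonant_speed) blast
  show "\<forall>s\<in>{a..b}. resonant_speed p c s \<noteq> 0"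
    using s resonant_speed_pos by (metis less_irrefl)
qed

lemma hamiltonian_orbit_resonant:
  assumes "\<And>t. t \<in> {0..T} \<Longrightarrow> 0 < Ip t \<and> real p * Ip t < c \<and>
      (Ip has_real_derivative resonant_speed p c (Ip t)) (at t within {0..T})"
  shows "hamiltonian_orbit p T (\<lambda>_. 0) (\<lambda>_. pi / 2) (\<lambda>t. c - real p * Ip t) Ip"
  unfolding hamiltonian_orbit_def
proof (intro ballI)
  fix t assume "t \<in> {0..T}"
  then have pos: "0 < Ip t" "real p * Ip t < c"
    and dIp: "(Ip has_real_derivative resonant_speed p c (Ip t)) (at t within {0..T})"
    using assms by auto
  have dI1: "((\<lambda>t. c - real p * Ip t) has_real_derivative - (real p * resonant_speed p c (Ip t)))
      (at t within {0..T})"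
    by (auto intro!: derivative_eq_intros dIp)
  have flat: "(\<lambda>x. Gplus p 0 (pi / 2) x v) = (\<lambda>_. 0)" "(\<lambda>x. Gplus p 0 (pi / 2) u x) = (\<lambda>_. 0)"
    for u v by (auto simp: Gplus_def)
  have d_th1: "deriv (\<lambda>x. Gplus p x (pi / 2) u v) 0 =
      real p * (sqrt 2 powr (1 - real p) * u powr (real p / 2) * sqrt v)" for u v
    by (rule DERIV_imp_deriv) (auto simp: Gplus_def intro!: derivative_eq_intros)
  have d_thp: "deriv (\<lambda>x. Gplus p 0 x u v) (pi / 2) =
      - (sqrt 2 powr (1 - real p) * u powr (real p / 2) * sqrt v)" for u v
    by (rule DERIV_imp_deriv) (auto simp: Gplus_def intro!: derivative_eq_intros)
  show "0 < c - real p * Ip t \<and> 0 < Ip t \<and>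
    ((\<lambda>_. 0) has_real_derivative deriv (\<lambda>x. Gplus p 0 (pi / 2) x (Ip t)) (c - real p * Ip t))
      (at t within {0..T}) \<and>
    ((\<lambda>_. pi / 2) has_real_derivative deriv (\<lambda>x. Gplus p 0 (pi / 2) (c - real p * Ip t) x) (Ip t))
      (at t within {0..T}) \<and>
    ((\<lambda>t. c - real p * Ip t) has_real_derivative - deriv (\<lambda>x. Gplus p x (pi / 2) (c - real p * Ip t) (Ip t)) 0)
      (at t within {0..T}) \<and>
    (Ip has_real_derivative - deriv (\<lambda>x. Gplus p 0 x (c - real p * Ip t) (Ip t)) (pi / 2))
      (at t within {0..T})"
    using pos dIp dI1 by (simp add: flat d_th1 d_thp resonant_speed_def)
qed

lemma inverse_resonant_speed_lower:
  fixes p :: nat and c s :: real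
  assumes p: "p \<ge> 2" and s: "0 < s" "real p * s < c"
  shows "(1 / sqrt s + real p / c * sqrt s) / (sqrt 2 powr (1 - real p) * c powr (real p / 2))
    \<le> 1 / resonant_speed p c s"
proof -
  have "0 < real p * s"
    using p s by simp
  then have c: "0 < c"
    using s by linarith
  define r where "r = (c - real p * s) / c"
  have r: "0 < r" "r \<le> 1"
    using s c \<open>0 < real p * s\<close> by (auto simp: r_def)
  have split: "(c - real p * s) powr (real p / 2) = c powr (real p / 2) * r powr (real p / 2)"
  proof -
    have "c - real p * s = c * r"
      using c by (simp add: r_def)
    then show ?thesis
      using c r by (simp add: powr_mult)
  qed
  have "r powr (real p / 2) \<le> r powr 1"
    using r p by (intro powr_mono') auto
  then have "(1 + real p * s / c) * r powr (real p / 2) \<le> (1 + real p * s / c) * r"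
    using r s c by (intro mult_left_mono) auto
  also have "\<dots> = 1 - (real p * s / c)\<^sup>2"
    using c by (simp add: r_def field_simps power2_eq_square)
  finally have "(1 + real p * s / c) * r powr (real p / 2) \<le> 1"
    using zero_le_power2[of "real p * s / c"] by linarith
  then have bound: "1 + real p * s / c \<le> 1 / r powr (real p / 2)"
    using r by (simp add: le_divide_eq)
  have "(1 + real p * s / c) / sqrt s = 1 / sqrt s + real p / c * (s / sqrt s)"
    by (simp add: add_divide_distrib)
  then have sqrt_form: "1 / sqrt s + real p / c * sqrt s = (1 + real p * s / c) / sqrt s"
    using real_div_sqrt[of s] s by simp
  define A where "A = sqrt 2 powr (1 - real p) * c powr (real p / 2)"
  have "(1 / sqrt s + real p / c * sqrt s) / A = (1 + real p * s / c) / (A * sqrt s)"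
    unfolding sqrt_form by (simp add: mult.commute)
  also have "\<dots> \<le> (1 / r powr (real p / 2)) / (A * sqrt s)"
    using bound c s by (intro divide_right_mono) (auto simp: A_def)
  also have "\<dots> = 1 / resonant_speed p c s"
    unfolding resonant_speed_def split A_def by (simp add: mult_ac)
  finally show ?thesis
    by (simp only: A_def)
qed

lemma inverse_resonant_speed_upper:
  fixes p :: nat and c s :: real
  assumes p: "p \<ge> 2" and s: "0 < s" "real p * s \<le> c / real p"
  shows "1 / resonant_speed p c s
    \<le> 1 / (sqrt 2 powr (1 - real p) * (c * (1 - 1 / real p)) powr (real p / 2) * sqrt s)"
proof -
  have "0 < real p * s"
    using p s by simp
  then have "0 < c / real p"
    using s by linarith
  then have q: "0 < c * (1 - 1 / real p)"
    using p by (simp add: field_simps)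
  moreover have "c * (1 - 1 / real p) \<le> c - real p * s"
    using s by (simp add: right_diff_distrib)
  ultimately have "(c * (1 - 1 / real p)) powr (real p / 2) \<le> (c - real p * s) powr (real p / 2)"
    by (intro powr_mono2) auto
  then have "sqrt 2 powr (1 - real p) * (c * (1 - 1 / real p)) powr (real p / 2) * sqrt s
      \<le> resonant_speed p c s"
    unfolding resonant_speed_def using s by (intro mult_right_mono mult_left_mono) auto
  moreover have "0 < (c * (1 - 1 / real p)) powr (real p / 2)"
    unfolding powr_gt_zero using q by linarith
  then have "0 < sqrt 2 powr (1 - real p) * (c * (1 - 1 / real p)) powr (real p / 2) * sqrt s"
    using s by simp
  ultimately show ?thesis
    by (intro divide_left_mono) (auto intro: mult_pos_pos)
qed

lemma integral_inverse_resonant_speed_ge: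
  fixes p :: nat and a b c :: real
  assumes p: "p \<ge> 2" and a: "0 < a" "a \<le> b" and b: "real p * b < c"
  shows "(2 * (sqrt b - sqrt a) + 2 * real p / (3 * c) * (b * sqrt b - a * sqrt a))
      / (sqrt 2 powr (1 - real p) * c powr (real p / 2))
    \<le> integral {a..b} (\<lambda>s. 1 / resonant_speed p c s)"
proof -
  have "0 < real p * b"
    using p a by simp
  with b have c: "0 < c"
    by linarith
  define A where "A = sqrt 2 powr (1 - real p) * c powr (real p / 2)"
  define k where "k = 2 * real p / (3 * c)"
  define \<Psi> where "\<Psi> s = (2 * sqrt s + k * (s * sqrt s)) / A" for s
  have "\<Psi> b - \<Psi> a \<le> integral {a..b} (\<lambda>s. 1 / resonant_speed p c s)"
  proof (rule antiderivative_diff_le_integral[where \<psi> = "\<lambda>s. (1 / sqrt s + real p / c * sqrt s) / A"])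
    fix x assume x: "x \<in> {a..b}"
    then have "0 < x"
      using a by simp
    have "((\<lambda>s. 2 * sqrt s + k * (s * sqrt s)) has_real_derivative
        2 * (inverse (sqrt x) / 2) + k * (1 * sqrt x + inverse (sqrt x) / 2 * x)) (at x)"
      using \<open>0 < x\<close> by (intro DERIV_add DERIV_cmult DERIV_mult DERIV_ident DERIV_real_sqrt)
    \<comment> \<open>Stated for an abstract \<open>q = \<surd>x\<close>, keeping \<open>\<surd>x * \<surd>x\<close> out of the field arithmetic.\<close>
    moreover have "2 * (inverse q / 2) + k * (1 * q + inverse q / 2 * (q * q)) = 1 / q + real p / c * q"
      if "0 < q" for q
      using that c by (simp add: k_def field_simps)
    from this[of "sqrt x"] have "2 * (inverse (sqrt x) / 2) + k * (1 * sqrt x + inverse (sqrt x) / 2 * x)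
        = 1 / sqrt x + real p / c * sqrt x"
      using \<open>0 < x\<close> by simp
    ultimately have "((\<lambda>s. 2 * sqrt s + k * (s * sqrt s)) has_real_derivative
        1 / sqrt x + real p / c * sqrt x) (at x)"
      by (rule DERIV_cong)
    then show "(\<Psi> has_real_derivative (1 / sqrt x + real p / c * sqrt x) / A) (at x within {a..b})"
      unfolding \<Psi>_def by (rule has_field_derivative_at_within[OF DERIV_cdivide])
    have "real p * x \<le> real p * b"
      using x by (intro mult_left_mono) auto
    then show "(1 / sqrt x + real p / c * sqrt x) / A \<le> 1 / resonant_speed p c x"
      using inverse_resonant_speed_lower[OF p \<open>0 < x\<close>] b by (simp add: A_def)
  qed (use a b in \<open>auto intro: inverse_resonant_speed_integrable\<close>)
  moreover have "\<Psi> b - \<Psi> a = (2 * (sqrt b - sqrt a) + k * (b * sqrt b - a * sqrt a)) / A"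
    by (simp add: \<Psi>_def diff_divide_distrib add_divide_distrib right_diff_distrib)
  ultimately show ?thesis
    by (simp only: A_def k_def)
qed

lemma integral_inverse_resonant_speed_le:
  fixes p :: nat and a b c :: real
  assumes p: "p \<ge> 2" and a: "0 < a" "a \<le> b" and b: "real p * b \<le> c / real p"
  shows "integral {a..b} (\<lambda>s. 1 / resonant_speed p c s)
    \<le> 2 * (sqrt b - sqrt a) / (sqrt 2 powr (1 - real p) * (c * (1 - 1 / real p)) powr (real p / 2))"
proof -
  define B where "B = sqrt 2 powr (1 - real p) * (c * (1 - 1 / real p)) powr (real p / 2)"
  have "0 < real p * b"
    using p a by simp
  then have "0 < c / real p"
    using b by linarith
  then have "0 < c" "c / real p < c"
    using p by (simp_all add: zero_less_divide_iff field_simps)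
  have "0 < c * (1 - 1 / real p)"
    using \<open>0 < c / real p\<close> p by (simp add: field_simps)
  then have "0 < (c * (1 - 1 / real p)) powr (real p / 2)"
    unfolding powr_gt_zero by linarith
  then have B: "0 < B"
    by (simp add: B_def)
  have "integral {a..b} (\<lambda>s. 1 / resonant_speed p c s) \<le> 2 * sqrt b / B - 2 * sqrt a / B"
  proof (rule integral_le_antiderivative_diff[where \<psi> = "\<lambda>s. 1 / (B * sqrt s)"])
    fix x assume x: "x \<in> {a..b}"
    then have "0 < x"
      using a by simp
    have "((\<lambda>s. 2 * sqrt s / B) has_real_derivative 1 / (B * sqrt x)) (at x)"
    proof (rule DERIV_cong)
      show "((\<lambda>s. 2 * sqrt s / B) has_real_derivative 2 * (inverse (sqrt x) / 2) / B) (at x)"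
        using \<open>0 < x\<close> by (intro DERIV_cdivide DERIV_cmult DERIV_real_sqrt)
      show "2 * (inverse (sqrt x) / 2) / B = 1 / (B * sqrt x)"
        using B \<open>0 < x\<close> by (simp add: field_simps)
    qed
    then show "((\<lambda>s. 2 * sqrt s / B) has_real_derivative 1 / (B * sqrt x)) (at x within {a..b})"
      by (rule has_field_derivative_at_within)
    have "real p * x \<le> real p * b"
      using x by (intro mult_left_mono) auto
    then show "1 / resonant_speed p c x \<le> 1 / (B * sqrt x)"
      using inverse_resonant_speed_upper[OF p \<open>0 < x\<close>] b by (simp add: B_def)
  next
    show "(\<lambda>s. 1 / resonant_speed p c s) integrable_on {a..b}"
      using a b \<open>c / real p < c\<close> by (intro inverse_resonant_speed_integrable) auto
  qed (use a in simp)
  then show ?thesis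
    by (simp only: B_def right_diff_distrib diff_divide_distrib)
qed

lemma cubic_le_cube_if_small:
  fixes P m r :: real
  assumes "1 \<le> P" and "0 \<le> r" and small: "4 * (P * r) \<le> m"
  shows "r ^ 3 + 3 * P * m\<^sup>2 * r \<le> m ^ 3"
proof -
  have "1 * r \<le> P * r"
    using assms by (intro mult_right_mono) auto
  then have "r \<le> m / 4"
    using small by linarith
  then have "r ^ 3 \<le> m ^ 3 / 64"
    using \<open>0 \<le> r\<close> power_mono[of r "m / 4" 3] by (simp add: power_divide)
  moreover have "3 * P * m\<^sup>2 * r \<le> 3 / 4 * m ^ 3"
  proof -
    have "3 * P * m\<^sup>2 * r = 3 / 4 * m\<^sup>2 * (4 * (P * r))"
      by simp
    also have "\<dots> \<le> 3 / 4 * m\<^sup>2 * m"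
      using small by (intro mult_left_mono) auto
    finally show ?thesis
      by (simp add: power2_eq_square power3_eq_cube)
  qed
  moreover have "0 \<le> m ^ 3"
    using \<open>r \<le> m / 4\<close> \<open>0 \<le> r\<close> by simp
  ultimately show ?thesis
    by linarith
qed

lemma sqrt_2_power_Suc: "sqrt 2 ^ (p + 1) = 2 / sqrt 2 powr (1 - real p)"
proof -
  have "sqrt 2 powr (1 - real p) * sqrt 2 ^ (p + 1) = sqrt 2 powr (1 - real p) * sqrt 2 powr real (p + 1)"
    by (subst powr_realpow) simp_all
  also have "\<dots> = sqrt 2 powr 2"
    by (simp add: powr_add[symmetric])
  also have "\<dots> = 2"
    by (simp add: powr_numeral)
  finally show ?thesis
    by (simp add: eq_divide_eq mult.commute)
qed

lemma powr_half_split_sqrt: "0 < c \<Longrightarrow> c powr (real p / 2) = c powr ((real p - 1) / 2) * sqrt c"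
  by (simp add: powr_half_sqrt[symmetric] powr_add[symmetric] diff_divide_distrib)

lemma resonant_transit_time_lower:
  fixes p :: nat and c \<epsilon> :: real
  assumes p: "p \<ge> 2" and c: "0 < c" and \<epsilon>: "0 < \<epsilon>" "\<epsilon> \<le> c / (16 * real p ^ 4)"
  shows "sqrt 2 ^ (p + 1) / c powr ((real p - 1) / 2) * (1 / real p)
    \<le> integral {\<epsilon>..c / (real p)\<^sup>2} (\<lambda>s. 1 / resonant_speed p c s)"
proof -
  define A where "A = sqrt 2 powr (1 - real p) * c powr (real p / 2)"
  define m where "m = sqrt c / real p"
  define r where "r = sqrt \<epsilon>"
  have "0 < real p"
    using p by simp
  have A: "0 < A"
    using c by (simp add: A_def)
  have m: "0 < m" "c = (real p * m)\<^sup>2"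
    using c p by (auto simp: m_def)
  have M: "c / (real p)\<^sup>2 = m\<^sup>2"
    using m p by (simp add: power_mult_distrib)
  have r: "0 < r" "\<epsilon> = r\<^sup>2"
    using \<epsilon> by (auto simp: r_def)
  have small: "4 * (real p * r) \<le> m"
  proof (rule power2_le_imp_le)
    have "(4 * (real p * r))\<^sup>2 = 16 * (real p)\<^sup>2 * \<epsilon>"
      using r by (simp add: power_mult_distrib)
    also have "\<dots> \<le> 16 * (real p)\<^sup>2 * (c / (16 * real p ^ 4))"
      using \<epsilon> by (intro mult_left_mono) auto
    also have "\<dots> = m\<^sup>2"
      using p M by (simp add: field_simps power2_eq_square power4_eq_xxxx)
    finally show "(4 * (real p * r))\<^sup>2 \<le> m\<^sup>2" .
  qed (use m in simp)
  moreover have "1 * r \<le> real p * r"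
    using p r by (intro mult_right_mono) auto
  ultimately have "r \<le> m"
    using r by linarith
  \<comment> \<open>This is where the threshold on \<open>\<epsilon>\<close> is used: the correction term beats the loss \<open>2\<surd>\<epsilon>\<close>.\<close>
  have gain: "2 * r \<le> 2 * real p / (3 * c) * (m\<^sup>2 * m - r\<^sup>2 * r)"
  proof -
    have k: "2 * real p / (3 * c) = 2 / (3 * real p * m\<^sup>2)"
      unfolding m(2) using \<open>0 < real p\<close> m by (simp add: power2_eq_square)
    have "2 * r = 2 / (3 * real p * m\<^sup>2) * (3 * real p * m\<^sup>2 * r)"
      using \<open>0 < real p\<close> m by simp
    also have "\<dots> \<le> 2 / (3 * real p * m\<^sup>2) * (m ^ 3 - r ^ 3)"
      using cubic_le_cube_if_small[of "real p" r m] p r small by (intro mult_left_mono) auto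
    finally show ?thesis
      unfolding k by (simp add: power2_eq_square power3_eq_cube)
  qed
  have "sqrt 2 ^ (p + 1) / c powr ((real p - 1) / 2) * (1 / real p) = 2 * m / A"
    unfolding sqrt_2_power_Suc A_def m_def powr_half_split_sqrt[OF c]
    using c \<open>0 < real p\<close> by (simp add: field_simps)
  also have "\<dots> \<le> (2 * (m - r) + 2 * real p / (3 * c) * (m\<^sup>2 * m - r\<^sup>2 * r)) / A"
    using gain A by (intro divide_right_mono) auto
  also have "\<dots> \<le> integral {r\<^sup>2..m\<^sup>2} (\<lambda>s. 1 / resonant_speed p c s)"
  proof -
    have "real p * m\<^sup>2 * 1 < real p * m\<^sup>2 * real p"
      using m p by (intro mult_strict_left_mono) auto
    then have "real p * m\<^sup>2 < c"
      using m(2) by (simp add: power2_eq_square mult_ac)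
    moreover have "0 < r\<^sup>2" "r\<^sup>2 \<le> m\<^sup>2"
      using r \<open>r \<le> m\<close> by (auto intro: power_mono)
    ultimately show ?thesis
      using integral_inverse_resonant_speed_ge[OF p \<open>0 < r\<^sup>2\<close> \<open>r\<^sup>2 \<le> m\<^sup>2\<close> \<open>real p * m\<^sup>2 < c\<close>] r(1) m(1)
      by (simp add: A_def)
  qed
  finally show ?thesis
    using M r by simp
qed

lemma resonant_transit_time_upper:
  fixes p :: nat and c \<epsilon> :: real
  assumes p: "p \<ge> 2" and c: "0 < c" and \<epsilon>: "0 < \<epsilon>" "\<epsilon> \<le> c / (real p)\<^sup>2"
  shows "integral {\<epsilon>..c / (real p)\<^sup>2} (\<lambda>s. 1 / resonant_speed p c s)
    \<le> sqrt 2 ^ (p + 1) / (c powr ((real p - 1) / 2) * (1 - 1 / real p) powr (real p / 2)) * (1 / real p)"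
proof -
  define a P Q where "a = sqrt 2 powr (1 - real p)" and "P = c powr ((real p - 1) / 2)"
    and "Q = (1 - 1 / real p) powr (real p / 2)"
  have "0 < 1 - 1 / real p"
    using p by (simp add: field_simps)
  then have pos: "0 < a" "0 < P" "0 < Q" "0 < sqrt c" "0 < real p"
    using c p by (auto simp: a_def P_def Q_def)
  have powr_split: "(c * (1 - 1 / real p)) powr (real p / 2) = P * sqrt c * Q"
    unfolding P_def Q_def powr_mult powr_half_split_sqrt[OF c] ..
  have sqrt_M: "sqrt (c / (real p)\<^sup>2) = sqrt c / real p"
    using p by (simp add: real_sqrt_divide)
  have "real p * (c / (real p)\<^sup>2) = c / real p"
    using p by (simp add: power2_eq_square)
  then have "integral {\<epsilon>..c / (real p)\<^sup>2} (\<lambda>s. 1 / resonant_speed p c s)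
      \<le> 2 * (sqrt (c / (real p)\<^sup>2) - sqrt \<epsilon>) / (a * (c * (1 - 1 / real p)) powr (real p / 2))"
    using integral_inverse_resonant_speed_le[OF p \<epsilon>(1,2)] by (simp add: a_def)
  also have "\<dots> \<le> 2 * sqrt (c / (real p)\<^sup>2) / (a * (c * (1 - 1 / real p)) powr (real p / 2))"
  proof (rule divide_right_mono)
    show "0 \<le> a * (c * (1 - 1 / real p)) powr (real p / 2)"
      unfolding powr_split using pos by (intro mult_nonneg_nonneg) auto
  qed (use \<epsilon>(1) in simp)
  also have "\<dots> = sqrt 2 ^ (p + 1) / (c powr ((real p - 1) / 2) * (1 - 1 / real p) powr (real p / 2)) * (1 / real p)"
    unfolding powr_split sqrt_M sqrt_2_power_Suc a_def[symmetric] P_def[symmetric] Q_def[symmetric]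
    using pos by (simp add: field_simps)
  finally show ?thesis .
qed

lemma resonant_orbit:
  fixes p :: nat and c \<epsilon> :: real
  assumes p: "p \<ge> 2" and \<epsilon>: "0 < \<epsilon>" "\<epsilon> \<le> c / (real p)\<^sup>2"
  defines "T \<equiv> integral {\<epsilon>..c / (real p)\<^sup>2} (\<lambda>s. 1 / resonant_speed p c s)"
  obtains y where "hamiltonian_orbit p T (\<lambda>_. 0) (\<lambda>_. pi / 2) (\<lambda>t. c - real p * y t) y"
    and "y 0 = \<epsilon>" and "y T = c / (real p)\<^sup>2"
proof -
  define M where "M = c / (real p)\<^sup>2"
  define b where "b = (M + c / real p) / 2"
  have "0 < c / (real p)\<^sup>2"
    using \<epsilon> by linarith
  then have c: "0 < c"
    by (simp add: zero_less_divide_iff)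
  have pM: "real p * M = c / real p"
    using p by (simp add: M_def power2_eq_square)
  have "c / real p * 1 < c / real p * real p"
    using c p by (intro mult_strict_left_mono) auto
  then have "c / real p < c"
    using p by simp
  have "M * 1 < M * real p"
    using c p by (intro mult_strict_left_mono) (auto simp: M_def)
  then have "M < c / real p"
    using pM by (simp add: mult.commute)
  then have "M < b"
    by (simp add: b_def)
  have range: "0 < s \<and> real p * s < c" if "s \<in> {\<epsilon> / 2..b}" for s
  proof
    show "0 < s"
      using that \<epsilon> by simp
    have "real p * s \<le> real p * b"
      using that by (intro mult_left_mono) auto
    also have "\<dots> = (c / real p + c) / 2"
      using p by (simp add: b_def pM distrib_left)
    finally show "real p * s < c"
      using \<open>c / real p < c\<close> by simp
  qed
  have cont: "continuous_on {\<epsilon> / 2..b} (resonant_speed p c)"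
    using range by (intro continuous_on_resonant_speed) blast
  have pos: "\<And>s. s \<in> {\<epsilon> / 2..b} \<Longrightarrow> 0 < resonant_speed p c s"
    using range resonant_speed_pos by blast
  have T: "T = integral {\<epsilon>..M} (\<lambda>s. 1 / resonant_speed p c s)"
    by (simp add: T_def M_def)
  have "\<epsilon> / 2 < \<epsilon>" "\<epsilon> \<le> M"
    using \<epsilon> by (auto simp: M_def)
  show thesis
  proof (rule separable_ode_solution[OF cont pos \<open>\<epsilon> / 2 < \<epsilon>\<close> \<open>\<epsilon> \<le> M\<close> \<open>M < b\<close>, folded T])
    fix y assume y0: "y 0 = \<epsilon>" and yT: "y T = M"
      and sol: "\<And>t. t \<in> {0..T} \<Longrightarrow> y t \<in> {\<epsilon> / 2..b} \<and> (y has_real_derivative resonant_speed p c (y t)) (at t)"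
    have orbit: "hamiltonian_orbit p T (\<lambda>_. 0) (\<lambda>_. pi / 2) (\<lambda>t. c - real p * y t) y"
    proof (rule hamiltonian_orbit_resonant)
      fix t assume "t \<in> {0..T}"
      then have y: "y t \<in> {\<epsilon> / 2..b}" and d: "(y has_real_derivative resonant_speed p c (y t)) (at t)"
        using sol by blast+
      from range[OF y] show "0 < y t \<and> real p * y t < c \<and>
          (y has_real_derivative resonant_speed p c (y t)) (at t within {0..T})"
        using has_field_derivative_at_within[OF d] by simp
    qed
    have "y T = c / (real p)\<^sup>2"
      using yT by (simp add: M_def)
    with orbit y0 show thesis
      by (rule that)
  qed
qed

theorem lemma3p3:
  fixes p :: nat and c :: real
  assumes "p \<ge> 2" and "c > 0"
  shows "\<exists>\<epsilon>0>0. \<forall>\<epsilon>. 0 < \<epsilon> \<and> \<epsilon> < \<epsilon>0 \<and> real p * \<epsilon> < c \<longrightarrow>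
           (\<exists>th1 thp I1 Ip T0. T0 > 0 \<and> hamiltonian_orbit p T0 th1 thp I1 Ip \<and>
              I1 0 = c - real p * \<epsilon> \<and> Ip 0 = \<epsilon> \<and>
              I1 T0 = c * (1 - 1 / real p) \<and> Ip T0 = c / (real p)^2 \<and>
              sqrt 2 ^ (p + 1) / c powr ((real p - 1) / 2) * (1 / real p) \<le> T0 \<and>
              T0 \<le> sqrt 2 ^ (p + 1) / (c powr ((real p - 1) / 2) * (1 - 1 / real p) powr (real p / 2)) * (1 / real p))"
proof (intro exI[of _ "c / (16 * real p ^ 4)"] conjI allI impI)
  show "0 < c / (16 * real p ^ 4)"
    using assms by simp
  have "(real p)\<^sup>2 \<le> real p ^ 4"
    using assms by (intro power_increasing) auto
  then have "(real p)\<^sup>2 \<le> 16 * real p ^ 4"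
    using zero_le_power[of "real p" 4] by linarith
  then have threshold: "c / (16 * real p ^ 4) \<le> c / (real p)\<^sup>2"
    using assms by (intro divide_left_mono) auto
  fix \<epsilon> assume "0 < \<epsilon> \<and> \<epsilon> < c / (16 * real p ^ 4) \<and> real p * \<epsilon> < c"
  then have \<epsilon>: "0 < \<epsilon>" "\<epsilon> \<le> c / (16 * real p ^ 4)" and \<epsilon>M: "\<epsilon> \<le> c / (real p)\<^sup>2"
    using threshold by auto
  define T0 where "T0 = integral {\<epsilon>..c / (real p)\<^sup>2} (\<lambda>s. 1 / resonant_speed p c s)"
  obtain y where orbit: "hamiltonian_orbit p T0 (\<lambda>_. 0) (\<lambda>_. pi / 2) (\<lambda>t. c - real p * y t) y"
    and y0: "y 0 = \<epsilon>" and yT0: "y T0 = c / (real p)\<^sup>2"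
    using resonant_orbit[OF assms(1) \<epsilon>(1) \<epsilon>M, folded T0_def] by blast
  note lower = resonant_transit_time_lower[OF assms \<epsilon>, folded T0_def]
  note upper = resonant_transit_time_upper[OF assms \<epsilon>(1) \<epsilon>M, folded T0_def]
  have "0 < sqrt 2 ^ (p + 1) / c powr ((real p - 1) / 2) * (1 / real p)"
    using assms by simp
  with lower have T0: "0 < T0"
    by linarith
  have I1T0: "c - real p * (c / (real p)\<^sup>2) = c * (1 - 1 / real p)"
    using assms by (simp add: power2_eq_square right_diff_distrib)
  show "\<exists>th1 thp I1 Ip T0. T0 > 0 \<and> hamiltonian_orbit p T0 th1 thp I1 Ip \<and>
      I1 0 = c - real p * \<epsilon> \<and> Ip 0 = \<epsilon> \<and>
      I1 T0 = c * (1 - 1 / real p) \<and> Ip T0 = c / (real p)^2 \<and>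
      sqrt 2 ^ (p + 1) / c powr ((real p - 1) / 2) * (1 / real p) \<le> T0 \<and>
      T0 \<le> sqrt 2 ^ (p + 1) / (c powr ((real p - 1) / 2) * (1 - 1 / real p) powr (real p / 2)) * (1 / real p)"
    by (rule exI[of _ "\<lambda>_. 0"], rule exI[of _ "\<lambda>_. pi / 2"], rule exI[of _ "\<lambda>t. c - real p * y t"],
        rule exI[of _ y], rule exI[of _ T0])
      (simp only: T0 orbit y0 yT0 I1T0 lower upper simp_thms)
qed

end
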